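(* Let $n\ge 2$, $T=\{1,\dots,n\}$, $\mathcal T$ a topology on $T$, and fix $k\ge 1$ such that the set $I=\{1,\dots,n-1\}\setminus X_{k-1}$ of indices of new quotient spaces is nonempty. Suppose all $N_i$, $i\in I$, are equal to a common value $s$ (Case 1: $\mu_1\ne 0$, $\mu_2=\mu_3=0$). Then the new $k$-systems of $\mathcal T$ form one of the following configurations, where each $A_j$ denotes a (possibly empty) set of old points and each $R_j$ a nonempty set of new points: (1a) the new $k$-systems are exactly $s+1$ upper non-paired $k$-systems $A_1\cup R_1,\dots,A_{s+1}\cup R_{s+1}$, each new point lies in exactly one of the sets $R_j$, and $\mu_1$ equals the total number of new points; (1b) the new $k$-systems are exactly $s$ pairs $A_j\cup R_j$, $A_j\cup R_j\cup\{n\}$ ($j=1,\dots,s$); (1c) there are no new $k$-systems (and $s=0$); (1d) the new $k$-systems are exactly lower $k$-systems $A_1\cup R_1\cup\{n\},\dots,A_x\cup R_x\cup\{n\}$ (non-paired), and each new point lies in exactly one of the sets $R_j$.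
   Context: For $\alpha\in T$, $\alpha^{*}$ denotes the smallest open set of $\mathcal T$ containing $\alpha$. For $m\ge 0$, an $m$-system is an open set $P$ with $|P\setminus\{n\}|=m$; upper if $n\notin P$, lower if $n\in P$. Two $k$-systems $P$ and $P\cup\{n\}$ ($n\notin P$) that are both open are called paired; a $k$-system not part of such a pair is non-paired. At stage $k$, a point $\alpha\neq n$ is old if $\alpha^{*}$ is an $m$-system for some $m<k$, and new if $\alpha^{*}$ is a $k$-system; $X_{k-1}$ is the set of old points. A $k$-system is new if it contains a point $p\neq n$ not contained in any $m$-system with $m\le k-1$. For $i\in\{1,\dots,n-1\}$, $Q^{i}$ is the quotient space obtained by identifying $i$ and $n$ (natural map $f_i$ onto $T(i,n)=\{\{z\}:z\notin\{i,n\}\}\cup\{\{i,n\}\}$; $V$ open iff $f_i^{-1}(V)\in\mathcal T$). $Q^{i}$ is a new quotient space if $i\notin X_{k-1}$. A new open $k$-set of $Q^{i}$ is an open $V$ of $Q^{i}$ with $|V|=k$ such that $f_i^{-1}(V)$ is a new $k$-system; $N_i$ is their number. With $s=\min_{i\in I}N_i$, $\mu_1,\mu_2,\mu_3$ denote the numbers of $i\in I$ with $N_i=s$, $s+1$, $s+2$ respectively (by a theorem of the paper, $N_i\in\{s,s+1,s+2\}$ always). *)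

theory Defs
  imports "HOL-Analysis.Analysis"
begin

text \<open>A topology on T = {1..n} is a value X :: nat topology with topspace X = {1..n};
  the open sets are those U with openin X U. The distinguished point is n.\<close>

definition star :: "nat topology \<Rightarrow> nat \<Rightarrow> nat set" where
  "star X a = \<Inter>{U. openin X U \<and> a \<in> U}"

definition msystem :: "nat topology \<Rightarrow> nat \<Rightarrow> nat \<Rightarrow> nat set \<Rightarrow> bool" where
  "msystem X n m P \<longleftrightarrow> openin X P \<and> card (P - {n}) = m"

text \<open>Old points at stage k (the set X_{k-1}) and new points at stage k.\<close>
definition old_pts :: "nat topology \<Rightarrow> nat \<Rightarrow> nat \<Rightarrow> nat set" where
  "old_pts X n k = {a \<in> topspace X. a \<noteq> n \<and> (\<exists>m<k. msystem X n m (star X a))}"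

definition new_pts :: "nat topology \<Rightarrow> nat \<Rightarrow> nat \<Rightarrow> nat set" where
  "new_pts X n k = {a \<in> topspace X. a \<noteq> n \<and> msystem X n k (star X a)}"

definition new_ksys :: "nat topology \<Rightarrow> nat \<Rightarrow> nat \<Rightarrow> nat set \<Rightarrow> bool" where
  "new_ksys X n k P \<longleftrightarrow> msystem X n k P \<and>
     (\<exists>p\<in>P. p \<noteq> n \<and> (\<forall>m Q. m \<le> k - 1 \<and> msystem X n m Q \<longrightarrow> p \<notin> Q))"

definition qmap :: "nat \<Rightarrow> nat \<Rightarrow> nat \<Rightarrow> nat set" where
  "qmap n i z = (if z = i \<or> z = n then {i, n} else {z})"

definition qpre :: "nat topology \<Rightarrow> nat \<Rightarrow> nat \<Rightarrow> nat set set \<Rightarrow> nat set" where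
  "qpre X n i V = {z \<in> topspace X. qmap n i z \<in> V}"

definition qopen :: "nat topology \<Rightarrow> nat \<Rightarrow> nat \<Rightarrow> nat set set \<Rightarrow> bool" where
  "qopen X n i V \<longleftrightarrow> V \<subseteq> qmap n i ` topspace X \<and> openin X (qpre X n i V)"

definition Nnew :: "nat topology \<Rightarrow> nat \<Rightarrow> nat \<Rightarrow> nat \<Rightarrow> nat" where
  "Nnew X n k i = card {V. qopen X n i V \<and> card V = k \<and> new_ksys X n k (qpre X n i V)}"

definition Iset :: "nat topology \<Rightarrow> nat \<Rightarrow> nat \<Rightarrow> nat set" where
  "Iset X n k = {1..n-1} - old_pts X n k"

definition smin :: "nat topology \<Rightarrow> nat \<Rightarrow> nat \<Rightarrow> nat" where
  "smin X n k = Min (Nnew X n k ` Iset X n k)"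

text \<open>mu X n k t = number of i in I with N_i = t
  (mu_1, mu_2, mu_3 correspond to t = s, s+1, s+2).\<close>
definition mu :: "nat topology \<Rightarrow> nat \<Rightarrow> nat \<Rightarrow> nat \<Rightarrow> nat" where
  "mu X n k t = card {i \<in> Iset X n k. Nnew X n k i = t}"

end

theory Submission
  imports Defs
begin

text \<open>A set W is a new k-system iff it is open and W - {n} is the punctured minimal
  neighbourhood star p - {n} of a new point p; these punctured stars partition the new points.
  Pulling back along the quotient map, N_i counts the new k-systems containing both or neither
  of i and n. If c is the number of upper new k-systems, this gives N_i = c for every non-new
  i \<in> I, while for a new point p the value N_p is c, lowered by one if star p - {n} is open and
  raised by one if star p \<union> {n} is open. So when all N_i coincide, all new points are of one
  kind -- only the upper set open, only the lower one, or both -- and these kinds give the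
  configurations (1a), (1d) and (1b); with no new points at all, (1b) holds with s = 0.\<close>

lemma star_mem: "a \<in> star X a"
  unfolding star_def by blast

lemma star_subset_openin: "openin X U \<Longrightarrow> a \<in> U \<Longrightarrow> star X a \<subseteq> U"
  unfolding star_def by blast

lemma openin_star:
  assumes "finite (topspace X)" and "a \<in> topspace X"
  shows "openin X (star X a)"
proof -
  have "{U. openin X U \<and> a \<in> U} \<subseteq> Pow (topspace X)"
    using openin_subset by blast
  then have "finite {U. openin X U \<and> a \<in> U}"
    using assms(1) by (meson finite_Pow_iff rev_finite_subset)
  then show ?thesis
    unfolding star_def using assms(2) by (intro openin_Inter) auto
qed

lemma qmap_image_qpre: "V \<subseteq> qmap n i ` topspace X \<Longrightarrow> qmap n i ` qpre X n i V = V"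
  unfolding qpre_def by auto

lemma mem_qpre_iff:
  assumes "i \<in> topspace X" and "n \<in> topspace X"
  shows "i \<in> qpre X n i V \<longleftrightarrow> n \<in> qpre X n i V"
  using assms unfolding qpre_def qmap_def by auto

lemma qpre_qmap_image:
  assumes "i \<noteq> n" and "W \<subseteq> topspace X" and "i \<in> W \<longleftrightarrow> n \<in> W"
  shows "qpre X n i (qmap n i ` W) = W"
proof
  show "W \<subseteq> qpre X n i (qmap n i ` W)"
    unfolding qpre_def using assms(2) by auto
  show "qpre X n i (qmap n i ` W) \<subseteq> W"
  proof
    fix z assume "z \<in> qpre X n i (qmap n i ` W)"
    then obtain w where w: "w \<in> W" "qmap n i z = qmap n i w"
      unfolding qpre_def by auto
    then have "z = w \<or> {z, w} \<subseteq> {i, n}"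
      using assms(1) unfolding qmap_def by (auto split: if_splits simp: doubleton_eq_iff)
    then show "z \<in> W"
      using w(1) assms(3) by auto
  qed
qed

lemma card_qmap_image:
  assumes "i \<noteq> n" and "i \<in> W \<longleftrightarrow> n \<in> W"
  shows "card (qmap n i ` W) = card (W - {n})"
proof -
  have "qmap n i ` W = qmap n i ` (W - {n})"
    using assms unfolding qmap_def by force
  moreover have "inj_on (qmap n i) (W - {n})"
    using assms(1) unfolding inj_on_def qmap_def by (auto split: if_splits)
  ultimately show ?thesis
    by (simp add: card_image)
qed

lemma Nnew_eq_card:
  assumes "i \<in> topspace X" and "n \<in> topspace X" and "i \<noteq> n"
  shows "Nnew X n k i = card {W. new_ksys X n k W \<and> (i \<in> W \<longleftrightarrow> n \<in> W)}"
proof -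
  let ?A = "{V. qopen X n i V \<and> card V = k \<and> new_ksys X n k (qpre X n i V)}"
  let ?B = "{W. new_ksys X n k W \<and> (i \<in> W \<longleftrightarrow> n \<in> W)}"
  have "bij_betw (qpre X n i) ?A ?B"
  proof (rule bij_betw_imageI)
    show "inj_on (qpre X n i) ?A"
      by (rule inj_on_inverseI[where g = "image (qmap n i)"]) (simp add: qopen_def qmap_image_qpre)
    show "qpre X n i ` ?A = ?B"
    proof
      show "qpre X n i ` ?A \<subseteq> ?B"
        using mem_qpre_iff[OF assms(1,2)] by auto
      show "?B \<subseteq> qpre X n i ` ?A"
      proof
        fix W assume "W \<in> ?B"
        then have W: "new_ksys X n k W" "i \<in> W \<longleftrightarrow> n \<in> W"
          by auto
        then have "openin X W" and card: "card (W - {n}) = k"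
          unfolding new_ksys_def msystem_def by auto
        then have "W \<subseteq> topspace X"
          using openin_subset by blast
        then have pre: "qpre X n i (qmap n i ` W) = W"
          using qpre_qmap_image[OF assms(3) _ W(2)] by blast
        have "qmap n i ` W \<in> ?A"
          unfolding qopen_def using pre W \<open>openin X W\<close> \<open>W \<subseteq> topspace X\<close> card
            card_qmap_image[OF assms(3) W(2)] by auto
        then show "W \<in> qpre X n i ` ?A"
          using pre by force
      qed
    qed
  qed
  then show ?thesis
    unfolding Nnew_def by (rule bij_betw_same_card)
qed

locale stage =
  fixes X :: "nat topology" and n k :: nat
  assumes two_le_n: "2 \<le> n" and topspace_eq: "topspace X = {1..n}" and one_le_k: "1 \<le> k"
begin

abbreviation pstar :: "nat \<Rightarrow> nat set" where
  "pstar p \<equiv> star X p - {n}"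

lemma finite_topspace: "finite (topspace X)"
  by (simp add: topspace_eq)

lemma openin_finite: "openin X U \<Longrightarrow> finite U"
  using finite_topspace openin_subset by (rule finite_subset[rotated])

lemma card_pstar_le:
  assumes "openin X U" and "p \<in> U"
  shows "card (pstar p) \<le> card (U - {n})"
  using star_subset_openin[OF assms] openin_finite[OF assms(1)] by (intro card_mono) auto

lemma mem_old_pts_iff: "p \<in> old_pts X n k \<longleftrightarrow> p \<in> topspace X \<and> p \<noteq> n \<and> card (pstar p) < k"
  unfolding old_pts_def msystem_def using openin_star[OF finite_topspace] by auto

lemma mem_new_pts_iff: "p \<in> new_pts X n k \<longleftrightarrow> p \<in> topspace X \<and> p \<noteq> n \<and> card (pstar p) = k"
  unfolding new_pts_def msystem_def using openin_star[OF finite_topspace] by auto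

lemma new_pts_subset_Iset: "new_pts X n k \<subseteq> Iset X n k"
  unfolding Iset_def using mem_new_pts_iff mem_old_pts_iff topspace_eq by auto

text \<open>The sets A_j \<union> R_j of the statement.\<close>

definition cores :: "nat set set" where
  "cores = pstar ` new_pts X n k"

lemma finite_cores: "finite cores"
proof -
  have "new_pts X n k \<subseteq> topspace X"
    by (auto simp: new_pts_def)
  then show ?thesis
    unfolding cores_def using finite_topspace by (meson finite_imageI finite_subset)
qed

lemma mem_core_iff:
  assumes "B \<in> cores" and p: "p \<in> new_pts X n k"
  shows "p \<in> B \<longleftrightarrow> B = pstar p"
proof
  obtain q where q: "q \<in> new_pts X n k" "B = pstar q"
    using assms(1) unfolding cores_def by auto
  assume "p \<in> B"
  then have "pstar p \<subseteq> pstar q"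
    using q star_subset_openin openin_star[OF finite_topspace] mem_new_pts_iff by blast
  moreover have "finite (pstar q)"
    using q openin_star[OF finite_topspace] openin_finite mem_new_pts_iff by blast
  ultimately show "B = pstar p"
    using q p mem_new_pts_iff card_subset_eq by metis
next
  show "B = pstar p \<Longrightarrow> p \<in> B"
    using p star_mem mem_new_pts_iff by blast
qed

lemma core_subset: "B \<in> cores \<Longrightarrow> B \<subseteq> old_pts X n k \<union> new_pts X n k"
proof
  fix q assume "B \<in> cores" and "q \<in> B"
  then obtain p where p: "p \<in> new_pts X n k" and q: "q \<in> star X p" "q \<noteq> n"
    unfolding cores_def by auto
  have "openin X (star X p)"
    using p openin_star[OF finite_topspace] by (simp add: mem_new_pts_iff)
  then have "q \<in> topspace X"
    using openin_subset q(1) by blast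
  have "card (pstar q) \<le> card (pstar p)"
    using card_pstar_le[OF \<open>openin X (star X p)\<close> q(1)] .
  then have "card (pstar q) \<le> k"
    using p by (simp add: mem_new_pts_iff)
  then show "q \<in> old_pts X n k \<union> new_pts X n k"
    using q(2) \<open>q \<in> topspace X\<close> by (auto simp: mem_old_pts_iff mem_new_pts_iff)
qed

lemma n_notin_core: "B \<in> cores \<Longrightarrow> n \<notin> B"
  unfolding cores_def by auto

lemma new_ksys_iff: "new_ksys X n k W \<longleftrightarrow> openin X W \<and> W - {n} \<in> cores"
proof
  assume "new_ksys X n k W"
  then obtain p where pW: "p \<in> W" and "p \<noteq> n"
    and fresh: "\<And>m Q. m \<le> k - 1 \<Longrightarrow> msystem X n m Q \<Longrightarrow> p \<notin> Q"
    and W: "openin X W" "card (W - {n}) = k"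
    unfolding new_ksys_def msystem_def by blast
  have p: "p \<in> topspace X"
    using openin_subset[OF W(1)] pW by blast
  have "\<not> card (pstar p) < k"
  proof
    assume "card (pstar p) < k"
    then have "msystem X n (card (pstar p)) (star X p)" and "card (pstar p) \<le> k - 1"
      using openin_star[OF finite_topspace p] unfolding msystem_def by auto
    then show False
      using fresh star_mem by blast
  qed
  then have "card (pstar p) = card (W - {n})"
    using card_pstar_le[OF W(1) pW] W(2) by linarith
  then have "W - {n} = pstar p"
    using star_subset_openin[OF W(1) pW] openin_finite[OF W(1)]
    by (intro card_subset_eq[symmetric]) auto
  moreover have "p \<in> new_pts X n k"
    using calculation W(2) p \<open>p \<noteq> n\<close> by (simp add: mem_new_pts_iff)
  ultimately show "openin X W \<and> W - {n} \<in> cores"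
    using W(1) unfolding cores_def by auto
next
  assume W: "openin X W \<and> W - {n} \<in> cores"
  then obtain p where p: "p \<in> new_pts X n k" and Wp: "W - {n} = pstar p"
    unfolding cores_def by auto
  then have "p \<in> W" "p \<noteq> n" and card_W: "card (W - {n}) = k"
    using star_mem[of p X] by (auto simp: mem_new_pts_iff)
  moreover have "p \<notin> Q" if "m \<le> k - 1" and "msystem X n m Q" for m Q
  proof
    assume "p \<in> Q"
    then have "k \<le> m"
      using that(2) card_pstar_le[of Q p] card_W Wp unfolding msystem_def by auto
    then show False
      using that(1) one_le_k by linarith
  qed
  ultimately show "new_ksys X n k W"
    unfolding new_ksys_def msystem_def using W by blast
qed

lemma new_ksys_set_eq:
  "{W. new_ksys X n k W} =
     {B \<in> cores. openin X B} \<union> (\<lambda>B. B \<union> {n}) ` {B \<in> cores. openin X (B \<union> {n})}"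
proof (intro set_eqI iffI)
  fix W assume "W \<in> {W. new_ksys X n k W}"
  then have W: "openin X W" "W - {n} \<in> cores"
    by (auto simp: new_ksys_iff)
  show "W \<in> {B \<in> cores. openin X B} \<union> (\<lambda>B. B \<union> {n}) ` {B \<in> cores. openin X (B \<union> {n})}"
  proof (cases "n \<in> W")
    case True
    then have "W = (W - {n}) \<union> {n}"
      by blast
    then show ?thesis
      using W by (metis (mono_tags, lifting) UnI2 image_eqI mem_Collect_eq)
  next
    case False
    then show ?thesis
      using W by simp
  qed
next
  fix W assume "W \<in> {B \<in> cores. openin X B} \<union> (\<lambda>B. B \<union> {n}) ` {B \<in> cores. openin X (B \<union> {n})}"
  then show "W \<in> {W. new_ksys X n k W}"
    using n_notin_core by (auto simp: new_ksys_iff)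
qed

abbreviation upper_cores :: "nat set set" where
  "upper_cores \<equiv> {B \<in> cores. openin X B}"

lemma upper_new_ksys_eq: "{W. new_ksys X n k W \<and> n \<notin> W} = upper_cores"
  using new_ksys_set_eq n_notin_core by auto

lemma Nnew_not_new:
  assumes "i \<in> Iset X n k" and "i \<notin> new_pts X n k"
  shows "Nnew X n k i = card upper_cores"
proof -
  have i: "i \<in> topspace X" "i \<noteq> n" "i \<notin> old_pts X n k"
    using assms(1) two_le_n unfolding Iset_def topspace_eq by auto
  have "i \<notin> W" if "new_ksys X n k W" for W
    using that core_subset i(2,3) assms(2) unfolding new_ksys_iff by blast
  then have "{W. new_ksys X n k W \<and> (i \<in> W \<longleftrightarrow> n \<in> W)} = {W. new_ksys X n k W \<and> n \<notin> W}"
    by blast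
  moreover have "n \<in> topspace X"
    using two_le_n by (simp add: topspace_eq)
  ultimately show ?thesis
    using Nnew_eq_card[OF i(1) _ i(2)] upper_new_ksys_eq by simp
qed

lemma unseparated_new_ksys_eq:
  assumes p: "p \<in> new_pts X n k"
  shows "{W. new_ksys X n k W \<and> (p \<in> W \<longleftrightarrow> n \<in> W)}
           = (upper_cores - {pstar p}) \<union> {W. W = pstar p \<union> {n} \<and> openin X W}"
    (is "?L = ?R")
proof (intro set_eqI iffI)
  fix W assume "W \<in> ?L"
  then have W: "openin X W" "W - {n} \<in> cores" "p \<in> W \<longleftrightarrow> n \<in> W"
    by (auto simp: new_ksys_iff)
  have "p \<in> W \<longleftrightarrow> W - {n} = pstar p"
    using mem_core_iff[OF W(2) p] p by (auto simp: mem_new_pts_iff)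
  then show "W \<in> ?R"
    using W by (cases "n \<in> W") auto
next
  fix W assume "W \<in> ?R"
  then show "W \<in> ?L"
  proof
    assume W: "W \<in> upper_cores - {pstar p}"
    then have "p \<notin> W" "n \<notin> W"
      using mem_core_iff[OF _ p] n_notin_core by auto
    then show "W \<in> ?L"
      using W n_notin_core by (auto simp: new_ksys_iff)
  next
    assume "W \<in> {W. W = pstar p \<union> {n} \<and> openin X W}"
    moreover have "pstar p \<in> cores"
      using p unfolding cores_def by blast
    ultimately show "W \<in> ?L"
      using p star_mem[of p X] by (auto simp: new_ksys_iff mem_new_pts_iff)
  qed
qed

lemma Nnew_new:
  assumes p: "p \<in> new_pts X n k"
  shows "Nnew X n k p + of_bool (openin X (pstar p))
           = card upper_cores + of_bool (openin X (pstar p \<union> {n}))"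
proof -
  let ?R = "(upper_cores - {pstar p}) \<union> {W. W = pstar p \<union> {n} \<and> openin X W}"
  have core: "pstar p \<in> cores"
    using p unfolding cores_def by blast
  have "{W. W = pstar p \<union> {n} \<and> openin X W}
                   = (if openin X (pstar p \<union> {n}) then {pstar p \<union> {n}} else {})"
    by auto
  then have "card ?R = card (upper_cores - {pstar p}) + of_bool (openin X (pstar p \<union> {n}))"
    using finite_cores core n_notin_core by (subst card_Un_disjoint) auto
  moreover have "card (upper_cores - {pstar p}) + of_bool (openin X (pstar p)) = card upper_cores"
  proof (cases "openin X (pstar p)")
    case True
    then have "Suc (card (upper_cores - {pstar p})) = card upper_cores"
      using finite_cores core by (intro card_Suc_Diff1) auto
    then show ?thesis
      using True by simp
  qed simp
  moreover have "p \<in> topspace X" "n \<in> topspace X" "p \<noteq> n"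
    using p two_le_n by (auto simp: mem_new_pts_iff topspace_eq)
  ultimately show ?thesis
    using Nnew_eq_card[of p X n k] unseparated_new_ksys_eq[OF p] by simp
qed

lemma openin_pstar_cases:
  "p \<in> new_pts X n k \<Longrightarrow> openin X (pstar p) \<or> openin X (pstar p \<union> {n})"
proof -
  assume "p \<in> new_pts X n k"
  then have "openin X (star X p)"
    using openin_star[OF finite_topspace] by (simp add: mem_new_pts_iff)
  moreover have "star X p = pstar p \<or> star X p = pstar p \<union> {n}"
    by blast
  ultimately show ?thesis
    by metis
qed

lemma Nnew_close_to_upper:
  assumes "i \<in> Iset X n k"
  shows "Nnew X n k i \<le> card upper_cores + 1 \<and> card upper_cores \<le> Nnew X n k i + 1"
proof (cases "i \<in> new_pts X n k")
  case True
  have "of_bool (openin X (pstar i)) \<le> (1::nat)" and "of_bool (openin X (pstar i \<union> {n})) \<le> (1::nat)"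
    by simp_all
  then show ?thesis
    using Nnew_new[OF True] by linarith
next
  case False
  then show ?thesis
    using Nnew_not_new[OF assms] by simp
qed

lemma Nnew_eq_smin:
  assumes "Iset X n k \<noteq> {}"
    and "mu X n k (smin X n k + 1) = 0" and "mu X n k (smin X n k + 2) = 0"
    and i: "i \<in> Iset X n k"
  shows "Nnew X n k i = smin X n k"
proof -
  let ?s = "smin X n k"
  have fin: "finite (Iset X n k)"
    unfolding Iset_def by simp
  have "?s \<in> Nnew X n k ` Iset X n k"
    unfolding smin_def using fin assms(1) by (intro Min_in) auto
  then obtain j where j: "j \<in> Iset X n k" "Nnew X n k j = ?s"
    by auto
  have "?s \<le> Nnew X n k i" "Nnew X n k i \<le> ?s + 2"
    using fin i Nnew_close_to_upper[OF i] Nnew_close_to_upper[OF j(1)] j(2)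
    unfolding smin_def by auto
  moreover have "Nnew X n k i \<noteq> ?s + d" if "mu X n k (?s + d) = 0" for d
    using that fin i unfolding mu_def by auto
  then have "Nnew X n k i \<noteq> ?s + 1" and "Nnew X n k i \<noteq> ?s + 2"
    using assms(2,3) by blast+
  ultimately show ?thesis
    by linarith
qed

lemma cores_enumeration:
  obtains A R :: "nat \<Rightarrow> nat set"
  where "(\<lambda>j. A j \<union> R j) ` {1..card cores} = cores"
    and "inj_on (\<lambda>j. A j \<union> R j) {1..card cores}"
    and "\<forall>j\<in>{1..card cores}. A j \<subseteq> old_pts X n k \<and> R j \<subseteq> new_pts X n k \<and> R j \<noteq> {}"
    and "\<forall>p\<in>new_pts X n k. \<exists>!j. j \<in> {1..card cores} \<and> p \<in> R j"
proof -
  obtain f where f: "bij_betw f {1..card cores} cores"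
    using ex_bij_betw_nat_finite_1[OF finite_cores] by blast
  define A where "A j = f j \<inter> old_pts X n k" for j
  define R where "R j = f j \<inter> new_pts X n k" for j
  have f_core: "f j \<in> cores" if "j \<in> {1..card cores}" for j
    using f that bij_betwE by blast
  have AR: "A j \<union> R j = f j" if "j \<in> {1..card cores}" for j
    using core_subset[OF f_core[OF that]] unfolding A_def R_def by blast
  have "(\<lambda>j. A j \<union> R j) ` {1..card cores} = f ` {1..card cores}"
    using AR by (rule image_cong[OF refl])
  then have "(\<lambda>j. A j \<union> R j) ` {1..card cores} = cores"
    using f by (simp add: bij_betw_def)
  moreover have "inj_on (\<lambda>j. A j \<union> R j) {1..card cores}"
    using inj_on_cong[of "{1..card cores}" "\<lambda>j. A j \<union> R j" f] AR bij_betw_imp_inj_on[OF f]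
    by blast
  moreover have "\<forall>j\<in>{1..card cores}. A j \<subseteq> old_pts X n k \<and> R j \<subseteq> new_pts X n k \<and> R j \<noteq> {}"
  proof
    fix j assume j: "j \<in> {1..card cores}"
    obtain p where "p \<in> new_pts X n k" "f j = pstar p"
      using f_core[OF j] unfolding cores_def by blast
    then have "R j \<noteq> {}"
      using mem_core_iff[OF f_core[OF j]] unfolding R_def by blast
    then show "A j \<subseteq> old_pts X n k \<and> R j \<subseteq> new_pts X n k \<and> R j \<noteq> {}"
      unfolding A_def R_def by blast
  qed
  moreover have "\<forall>p\<in>new_pts X n k. \<exists>!j. j \<in> {1..card cores} \<and> p \<in> R j"
  proof (intro ballI)
    fix p assume p: "p \<in> new_pts X n k"
    have R_iff: "p \<in> R j \<longleftrightarrow> f j = pstar p" if "j \<in> {1..card cores}" for j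
      using mem_core_iff[OF f_core[OF that] p] p unfolding R_def by blast
    have "pstar p \<in> f ` {1..card cores}"
      using f p unfolding bij_betw_def cores_def by blast
    then obtain j0 where j0: "j0 \<in> {1..card cores}" "f j0 = pstar p"
      by blast
    show "\<exists>!j. j \<in> {1..card cores} \<and> p \<in> R j"
    proof (rule ex1I[of _ j0])
      show "j0 \<in> {1..card cores} \<and> p \<in> R j0"
        using j0 R_iff by blast
      show "j = j0" if "j \<in> {1..card cores} \<and> p \<in> R j" for j
      proof (rule inj_onD[OF bij_betw_imp_inj_on[OF f]])
        show "f j = f j0"
          using that j0(2) R_iff[of j] by blast
      qed (use that j0 in auto)
    qed
  qed
  ultimately show ?thesis
    by (rule that)
qed

lemma smin_balance:
  assumes "\<forall>i\<in>Iset X n k. Nnew X n k i = smin X n k" and "q \<in> new_pts X n k"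
  shows "smin X n k + of_bool (openin X (pstar q))
           = card upper_cores + of_bool (openin X (pstar q \<union> {n}))"
  using Nnew_new[OF assms(2)] assms new_pts_subset_Iset by auto

lemma inj_on_insert_n_cores: "inj_on (\<lambda>B. B \<union> {n}) cores"
  unfolding inj_on_def using n_notin_core by blast

lemma configuration_upper:
  assumes equal: "\<forall>i\<in>Iset X n k. Nnew X n k i = smin X n k"
    and p0: "p0 \<in> new_pts X n k" "openin X (pstar p0)" "\<not> openin X (pstar p0 \<union> {n})"
  shows "\<exists>A R :: nat \<Rightarrow> nat set.
       {P. new_ksys X n k P} = (\<lambda>j. A j \<union> R j) ` {1..smin X n k + 1}
     \<and> inj_on (\<lambda>j. A j \<union> R j) {1..smin X n k + 1}
     \<and> (\<forall>j\<in>{1..smin X n k + 1}. A j \<subseteq> old_pts X n k \<and> R j \<subseteq> new_pts X n k \<and> R j \<noteq> {}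
          \<and> n \<notin> A j \<union> R j \<and> \<not> openin X (A j \<union> R j \<union> {n}))
     \<and> (\<forall>p\<in>new_pts X n k. \<exists>!j. j \<in> {1..smin X n k + 1} \<and> p \<in> R j)
     \<and> mu X n k (smin X n k) = card (new_pts X n k)"
proof -
  let ?s = "smin X n k"
  have s_eq: "?s + 1 = card upper_cores"
    using smin_balance[OF equal p0(1)] p0(2,3) by simp
  have upper: "openin X (pstar q) \<and> \<not> openin X (pstar q \<union> {n})" if "q \<in> new_pts X n k" for q
    using smin_balance[OF equal that] s_eq
    by (cases "openin X (pstar q)"; cases "openin X (pstar q \<union> {n})") simp_all
  have I_eq: "Iset X n k = new_pts X n k"
  proof
    show "Iset X n k \<subseteq> new_pts X n k"
    proof
      fix i assume i: "i \<in> Iset X n k"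
      show "i \<in> new_pts X n k"
        by (rule ccontr) (use Nnew_not_new[OF i] bspec[OF equal i] s_eq in simp)
    qed
  qed (rule new_pts_subset_Iset)
  have all_upper: "upper_cores = cores" and no_lower: "{B \<in> cores. openin X (B \<union> {n})} = {}"
    using upper unfolding cores_def by auto
  have Sk: "{W. new_ksys X n k W} = cores"
    unfolding new_ksys_set_eq all_upper no_lower by simp
  have card_cores: "?s + 1 = card cores"
    using s_eq all_upper by simp
  have "{i \<in> Iset X n k. Nnew X n k i = ?s} = Iset X n k"
    using equal by blast
  then have mu_eq: "mu X n k ?s = card (new_pts X n k)"
    unfolding mu_def I_eq by simp
  obtain A R where enum: "(\<lambda>j. A j \<union> R j) ` {1..card cores} = cores"
    "inj_on (\<lambda>j. A j \<union> R j) {1..card cores}"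
    "\<forall>j\<in>{1..card cores}. A j \<subseteq> old_pts X n k \<and> R j \<subseteq> new_pts X n k \<and> R j \<noteq> {}"
    "\<forall>p\<in>new_pts X n k. \<exists>!j. j \<in> {1..card cores} \<and> p \<in> R j"
    by (rule cores_enumeration)
  have props: "\<forall>j\<in>{1..card cores}. A j \<subseteq> old_pts X n k \<and> R j \<subseteq> new_pts X n k \<and> R j \<noteq> {}
          \<and> n \<notin> A j \<union> R j \<and> \<not> openin X (A j \<union> R j \<union> {n})"
  proof (intro ballI)
    fix j assume j: "j \<in> {1..card cores}"
    then have core: "A j \<union> R j \<in> cores"
      using enum(1) by blast
    then have "n \<notin> A j \<union> R j" and "\<not> openin X (A j \<union> R j \<union> {n})"
      using n_notin_core no_lower by blast+
    then show "A j \<subseteq> old_pts X n k \<and> R j \<subseteq> new_pts X n k \<and> R j \<noteq> {}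
          \<and> n \<notin> A j \<union> R j \<and> \<not> openin X (A j \<union> R j \<union> {n})"
      using enum(3) j by blast
  qed
  show ?thesis
    unfolding card_cores Sk
    by (rule exI[of _ A], rule exI[of _ R]) (intro conjI enum(1)[symmetric] enum(2,4) props mu_eq)
qed

lemma configuration_lower:
  assumes equal: "\<forall>i\<in>Iset X n k. Nnew X n k i = smin X n k"
    and p0: "p0 \<in> new_pts X n k" "\<not> openin X (pstar p0)" "openin X (pstar p0 \<union> {n})"
  shows "\<exists>(x::nat) (A :: nat \<Rightarrow> nat set) (R :: nat \<Rightarrow> nat set). x \<ge> 1 \<and>
       {P. new_ksys X n k P} = (\<lambda>j. A j \<union> R j \<union> {n}) ` {1..x}
     \<and> inj_on (\<lambda>j. A j \<union> R j \<union> {n}) {1..x}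
     \<and> (\<forall>j\<in>{1..x}. A j \<subseteq> old_pts X n k \<and> R j \<subseteq> new_pts X n k \<and> R j \<noteq> {}
          \<and> \<not> openin X (A j \<union> R j))
     \<and> (\<forall>p\<in>new_pts X n k. \<exists>!j. j \<in> {1..x} \<and> p \<in> R j)"
proof -
  let ?s = "smin X n k"
  have s_eq: "?s = card upper_cores + 1"
    using smin_balance[OF equal p0(1)] p0(2,3) by simp
  have lower: "\<not> openin X (pstar q) \<and> openin X (pstar q \<union> {n})" if "q \<in> new_pts X n k" for q
    using smin_balance[OF equal that] s_eq
    by (cases "openin X (pstar q)"; cases "openin X (pstar q \<union> {n})") simp_all
  have no_upper: "upper_cores = {}" and all_lower: "{B \<in> cores. openin X (B \<union> {n})} = cores"
    using lower unfolding cores_def by auto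
  have Sk: "{W. new_ksys X n k W} = (\<lambda>B. B \<union> {n}) ` cores"
    unfolding new_ksys_set_eq no_upper all_lower by simp
  have "cores \<noteq> {}"
    using p0(1) unfolding cores_def by blast
  then have nonempty: "1 \<le> card cores"
    using finite_cores by (simp add: Suc_le_eq card_gt_0_iff)
  obtain A R where enum: "(\<lambda>j. A j \<union> R j) ` {1..card cores} = cores"
    "inj_on (\<lambda>j. A j \<union> R j) {1..card cores}"
    "\<forall>j\<in>{1..card cores}. A j \<subseteq> old_pts X n k \<and> R j \<subseteq> new_pts X n k \<and> R j \<noteq> {}"
    "\<forall>p\<in>new_pts X n k. \<exists>!j. j \<in> {1..card cores} \<and> p \<in> R j"
    by (rule cores_enumeration)
  have "(\<lambda>j. A j \<union> R j \<union> {n}) ` {1..card cores}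
          = (\<lambda>B. B \<union> {n}) ` ((\<lambda>j. A j \<union> R j) ` {1..card cores})"
    by (simp only: image_image)
  then have image: "(\<lambda>j. A j \<union> R j \<union> {n}) ` {1..card cores} = {W. new_ksys X n k W}"
    unfolding Sk by (simp only: enum(1))
  have inj: "inj_on (\<lambda>j. A j \<union> R j \<union> {n}) {1..card cores}"
    using comp_inj_on[OF enum(2)] inj_on_insert_n_cores unfolding enum(1) comp_def by blast
  have props: "\<forall>j\<in>{1..card cores}. A j \<subseteq> old_pts X n k \<and> R j \<subseteq> new_pts X n k \<and> R j \<noteq> {}
          \<and> \<not> openin X (A j \<union> R j)"
  proof (intro ballI)
    fix j assume j: "j \<in> {1..card cores}"
    then have "A j \<union> R j \<in> cores"
      using enum(1) by blast
    then have "\<not> openin X (A j \<union> R j)"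
      using no_upper by blast
    then show "A j \<subseteq> old_pts X n k \<and> R j \<subseteq> new_pts X n k \<and> R j \<noteq> {} \<and> \<not> openin X (A j \<union> R j)"
      using enum(3) j by blast
  qed
  show ?thesis
    by (rule exI[of _ "card cores"], rule exI[of _ A], rule exI[of _ R])
      (intro conjI nonempty image[symmetric] inj props enum(4))
qed

lemma configuration_paired:
  assumes equal: "\<forall>i\<in>Iset X n k. Nnew X n k i = smin X n k"
    and "Iset X n k \<noteq> {}"
    and paired: "\<forall>q\<in>new_pts X n k. openin X (pstar q) \<and> openin X (pstar q \<union> {n})"
  shows "\<exists>A R :: nat \<Rightarrow> nat set.
       {P. new_ksys X n k P} = (\<lambda>j. A j \<union> R j) ` {1..smin X n k}
                                \<union> (\<lambda>j. A j \<union> R j \<union> {n}) ` {1..smin X n k}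
     \<and> inj_on (\<lambda>j. A j \<union> R j) {1..smin X n k}
     \<and> (\<forall>j\<in>{1..smin X n k}. A j \<subseteq> old_pts X n k \<and> R j \<subseteq> new_pts X n k \<and> R j \<noteq> {})"
proof -
  have all_upper: "upper_cores = cores" and all_lower: "{B \<in> cores. openin X (B \<union> {n})} = cores"
    using paired unfolding cores_def by auto
  obtain i where i: "i \<in> Iset X n k"
    using assms(2) by blast
  have "Nnew X n k i = card upper_cores"
  proof (cases "i \<in> new_pts X n k")
    case True
    then show ?thesis
      using Nnew_new[OF True] bspec[OF paired True] by simp
  qed (use Nnew_not_new[OF i] in simp)
  then have card_cores: "smin X n k = card cores"
    using bspec[OF equal i] all_upper by simp
  obtain A R where enum: "(\<lambda>j. A j \<union> R j) ` {1..card cores} = cores"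
    "inj_on (\<lambda>j. A j \<union> R j) {1..card cores}"
    "\<forall>j\<in>{1..card cores}. A j \<subseteq> old_pts X n k \<and> R j \<subseteq> new_pts X n k \<and> R j \<noteq> {}"
    "\<forall>p\<in>new_pts X n k. \<exists>!j. j \<in> {1..card cores} \<and> p \<in> R j"
    by (rule cores_enumeration)
  have "(\<lambda>j. A j \<union> R j \<union> {n}) ` {1..card cores}
          = (\<lambda>B. B \<union> {n}) ` ((\<lambda>j. A j \<union> R j) ` {1..card cores})"
    by (simp only: image_image)
  then have Sk: "{W. new_ksys X n k W} = (\<lambda>j. A j \<union> R j) ` {1..card cores}
                                \<union> (\<lambda>j. A j \<union> R j \<union> {n}) ` {1..card cores}"
    unfolding new_ksys_set_eq all_upper all_lower by (simp only: enum(1))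
  show ?thesis
    unfolding card_cores by (rule exI[of _ A], rule exI[of _ R]) (intro conjI Sk enum(2,3))
qed

end

theorem theorem3:
  fixes X :: "nat topology" and n k :: nat
  assumes "n \<ge> 2" and "topspace X = {1..n}" and "k \<ge> 1"
    and "Iset X n k \<noteq> {}"
    and "mu X n k (smin X n k) \<noteq> 0"
    and "mu X n k (smin X n k + 1) = 0" and "mu X n k (smin X n k + 2) = 0"
  shows
   "(\<exists>A R :: nat \<Rightarrow> nat set.
       {P. new_ksys X n k P} = (\<lambda>j. A j \<union> R j) ` {1..smin X n k + 1}
     \<and> inj_on (\<lambda>j. A j \<union> R j) {1..smin X n k + 1}
     \<and> (\<forall>j\<in>{1..smin X n k + 1}. A j \<subseteq> old_pts X n k \<and> R j \<subseteq> new_pts X n k \<and> R j \<noteq> {}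
          \<and> n \<notin> A j \<union> R j \<and> \<not> openin X (A j \<union> R j \<union> {n}))
     \<and> (\<forall>p\<in>new_pts X n k. \<exists>!j. j \<in> {1..smin X n k + 1} \<and> p \<in> R j)
     \<and> mu X n k (smin X n k) = card (new_pts X n k))
  \<or> (\<exists>A R :: nat \<Rightarrow> nat set.
       {P. new_ksys X n k P} = (\<lambda>j. A j \<union> R j) ` {1..smin X n k}
                                \<union> (\<lambda>j. A j \<union> R j \<union> {n}) ` {1..smin X n k}
     \<and> inj_on (\<lambda>j. A j \<union> R j) {1..smin X n k}
     \<and> (\<forall>j\<in>{1..smin X n k}. A j \<subseteq> old_pts X n k \<and> R j \<subseteq> new_pts X n k \<and> R j \<noteq> {}))
  \<or> ({P. new_ksys X n k P} = {} \<and> smin X n k = 0)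
  \<or> (\<exists>(x::nat) (A :: nat \<Rightarrow> nat set) (R :: nat \<Rightarrow> nat set). x \<ge> 1 \<and>
       {P. new_ksys X n k P} = (\<lambda>j. A j \<union> R j \<union> {n}) ` {1..x}
     \<and> inj_on (\<lambda>j. A j \<union> R j \<union> {n}) {1..x}
     \<and> (\<forall>j\<in>{1..x}. A j \<subseteq> old_pts X n k \<and> R j \<subseteq> new_pts X n k \<and> R j \<noteq> {}
          \<and> \<not> openin X (A j \<union> R j))
     \<and> (\<forall>p\<in>new_pts X n k. \<exists>!j. j \<in> {1..x} \<and> p \<in> R j))"
proof -
  interpret stage X n k
    using assms(1-3) by unfold_locales
  have equal: "\<forall>i\<in>Iset X n k. Nnew X n k i = smin X n k"
    using Nnew_eq_smin assms(4,6,7) by blast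
  consider (upper) p where "p \<in> new_pts X n k" "openin X (pstar p)" "\<not> openin X (pstar p \<union> {n})"
    | (lower) p where "p \<in> new_pts X n k" "\<not> openin X (pstar p)" "openin X (pstar p \<union> {n})"
    | (paired) "\<forall>q\<in>new_pts X n k. openin X (pstar q) \<and> openin X (pstar q \<union> {n})"
    using openin_pstar_cases by blast
  then show ?thesis
  proof cases
    case upper
    from configuration_upper[OF equal this] show ?thesis
      by (rule disjI1)
  next
    case lower
    from configuration_lower[OF equal this] show ?thesis
      by (intro disjI2)
  next
    case paired
    from configuration_paired[OF equal assms(4) this] show ?thesis
      by (rule disjI2[OF disjI1])
  qed
qed

end
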